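(* Assume Setting A, suppose $\mathbf I(\lambda^\circ)$ is positive definite, and suppose $E\|D_\lambda\log p_k^*(X_k;\lambda^\circ)\|^2<\infty$ and $E\|D^2_{\lambda\lambda}\log p_k^*(X_k;\lambda^\circ)\|<\infty$ for all $k$. Let $\mathbf W$ be the $K\times K$ matrix with entries $W_{kl}=\Delta_{kl}n_k^{-1}+n_0^{-1}$ ($k,l=1,\dots,K$, $\Delta$ the Kronecker delta). Then (a) $\mathbf I(\lambda^\circ)-\boldsymbol\Sigma(\lambda^\circ)=\mathbf I(\lambda^\circ)\begin{bmatrix}\mathbf 0&\mathbf 0\\ \mathbf 0&\mathbf W\end{bmatrix}\mathbf I(\lambda^\circ)$ (blocks of sizes $S$ and $K$); (b) $[\mathbf I^{-1}(\lambda^\circ)]_{\theta\theta}=[\mathbf I^{-1}(\lambda^\circ)\,\boldsymbol\Sigma(\lambda^\circ)\,\mathbf I^{-1}(\lambda^\circ)]_{\theta\theta}$, where $[\cdot]_{\theta\theta}$ denotes the upper-left $S\times S$ block.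
   Context: Setting A. Let $(\Omega_X,\mathcal B_X)$, $(\Omega_Y,\mathcal B_Y)$ be measurable spaces with a $\sigma$-finite measure $\nu_X$ on $\Omega_X$. Fix $K\ge1$, distinct $y_0,\dots,y_K\in\Omega_Y$, $S\ge1$, and for $\theta\in\mathbb R^S$ and $k=0,\dots,K$ measurable functions $x\mapsto\psi_\theta(x,y_k)$ on $\Omega_X$ with $\psi_\theta(x,y_0)=0$, such that $\theta\mapsto\psi_\theta(x,y_k)$ is three times continuously differentiable for every $x$. Let $\theta^\circ\in\mathbb R^S$ (true parameter) and for each $k$ let $f_k$ be an everywhere positive probability density on $\Omega_X$ w.r.t. $\nu_X$ of the form $\log f_k(x)=\beta(x)+\psi_{\theta^\circ}(x,y_k)-\varepsilon_k$ with a measurable $\beta$ and constants $\varepsilon_k$ (these are the conditional densities of $X$ given $Y=y_k$ under the association model with log-odds ratio $\psi_{\theta^\circ}$). $X_k$ denotes a random element with density $f_k$. Fix $\bar r_0,\dots,\bar r_K>0$ with $\sum_k\bar r_k=1$. On a common probability space let $(X_{ki})_{i\ge1}$, $k=0,\dots,K$, be independent i.i.d. sequences with $X_{ki}\sim X_k$; for $n$ in an increasing sequence with $n_k=\bar r_kn\in\mathbb N$ for all $k$, the sample is $\{X_{ki}:k=0,\dots,K,\ i\le n_k\}$. For $\lambda=(\theta,\gamma^* )\in\mathbb R^S\times\mathbb R^K$, $\gamma^*=(\gamma_1^*,\dots,\gamma_K^* )$, $\gamma_0^*:=0$, put $p_k^*(x;\lambda)=\exp(\gamma_k^*+\psi_\theta(x,y_k))/\sum_{l=0}^K\exp(\gamma_l^*+\psi_\theta(x,y_l))$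 and $\ell^{(n)}(\lambda)=\sum_{k=0}^K\sum_{i=1}^{n_k}\log p_k^*(X_{ki};\lambda)$. The true value is $\lambda^\circ=(\theta^\circ,\gamma^\circ)$ with $\gamma_k^\circ=\log\bar r_k-\varepsilon_k-\log\bar r_0+\varepsilon_0$, so that $p_k^*(x;\lambda^\circ)=\bar r_kf_k(x)/\sum_l\bar r_lf_l(x)$. $D_\lambda$ denotes the gradient in $\lambda$, $\mathbf J^{(n)}(\lambda)=-D^2_{\lambda\lambda}\ell^{(n)}(\lambda)$; $E$, $\mathrm{Cov}$, $P$ refer to the true distribution. Define $\bar{\mathbf I}(\lambda)=\sum_k\bar r_kE[-D^2_{\lambda\lambda}\log p_k^*(X_k;\lambda)]$, $\bar{\boldsymbol\Sigma}(\lambda)=\sum_k\bar r_k\mathrm{Cov}(D_\lambda\log p_k^*(X_k;\lambda))$, $\mathbf I(\lambda)=n\bar{\mathbf I}(\lambda)=E\mathbf J^{(n)}(\lambda)$, $\boldsymbol\Sigma(\lambda)=n\bar{\boldsymbol\Sigma}(\lambda)=\mathrm{Cov}(D_\lambda\ell^{(n)}(\lambda))$. *)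

theory Defs
  imports "HOL-Analysis.Analysis" "HOL-Probability.Probability"
begin

definition partial :: "(real^'n::finite \<Rightarrow> real) \<Rightarrow> 'n \<Rightarrow> real^'n::finite \<Rightarrow> real" where
  "partial g i x = deriv (\<lambda>t. g (x + t *\<^sub>R axis i 1)) 0"

definition has_partials :: "(real^'n::finite \<Rightarrow> real) \<Rightarrow> bool" where
  "has_partials g \<longleftrightarrow> (\<forall>i x. (\<lambda>t. g (x + t *\<^sub>R axis i 1)) differentiable (at 0))"

definition C1_fun :: "(real^'n::finite \<Rightarrow> real) \<Rightarrow> bool" where
  "C1_fun g \<longleftrightarrow> continuous_on UNIV g \<and> has_partials g \<and> (\<forall>i. continuous_on UNIV (partial g i))"

definition C3_fun :: "(real^'n::finite \<Rightarrow> real) \<Rightarrow> bool" where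
  "C3_fun g \<longleftrightarrow> C1_fun g \<and> (\<forall>i. C1_fun (partial g i)) \<and> (\<forall>i j. C1_fun (partial (partial g i) j))"

definition grad :: "(real^'n::finite \<Rightarrow> real) \<Rightarrow> real^'n::finite \<Rightarrow> real^'n" where
  "grad g x = (\<chi> i. partial g i x)"

definition hess :: "(real^'n::finite \<Rightarrow> real) \<Rightarrow> real^'n::finite \<Rightarrow> real^'n^'n" where
  "hess g x = (\<chi> i j. partial (partial g j) i x)"

definition pos_def :: "real^'n::finite^'n \<Rightarrow> bool" where
  "pos_def A \<longleftrightarrow> (\<forall>v. v \<noteq> 0 \<longrightarrow> 0 < v \<bullet> (A *v v))"

text \<open>Parameter lambda = (theta, gamma*) in R^(S+K); class index k :: 'k option, None = class 0.\<close>
definition theta_of :: "real^('s::finite + 'k::finite) \<Rightarrow> real^'s" where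
  "theta_of lam = (\<chi> s. lam $ Inl s)"

definition gam :: "real^('s::finite + 'k::finite) \<Rightarrow> 'k option \<Rightarrow> real" where
  "gam lam k = (case k of None \<Rightarrow> 0 | Some j \<Rightarrow> lam $ Inr j)"

definition p_star :: "(real^'s \<Rightarrow> 'x \<Rightarrow> 'y \<Rightarrow> real) \<Rightarrow> ('k::finite option \<Rightarrow> 'y)
    \<Rightarrow> 'k option \<Rightarrow> 'x \<Rightarrow> real^('s::finite + 'k::finite) \<Rightarrow> real" where
  "p_star \<psi> y k x lam =
     exp (gam lam k + \<psi> (theta_of lam) x (y k)) /
     (\<Sum>l\<in>UNIV. exp (gam lam l + \<psi> (theta_of lam) x (y l)))"

definition true_param :: "real^'s \<Rightarrow> ('k option \<Rightarrow> real) \<Rightarrow> ('k option \<Rightarrow> real) \<Rightarrow> real^('s::finite + 'k::finite)" where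
  "true_param \<theta>0 r \<epsilon> = (\<chi> a. case a of Inl s \<Rightarrow> \<theta>0 $ s
       | Inr j \<Rightarrow> ln (r (Some j)) - \<epsilon> (Some j) - ln (r None) + \<epsilon> None)"

definition cov_mat :: "'x measure \<Rightarrow> ('x \<Rightarrow> real^'n) \<Rightarrow> real^'n^'n" where
  "cov_mat P V = (\<chi> i j. \<integral>x. (V x $ i - (\<integral>z. V z $ i \<partial>P)) * (V x $ j - (\<integral>z. V z $ j \<partial>P)) \<partial>P)"

definition distr_k :: "'x measure \<Rightarrow> ('k option \<Rightarrow> 'x \<Rightarrow> real) \<Rightarrow> 'k option \<Rightarrow> 'x measure" where
  "distr_k M f k = density M (\<lambda>x. ennreal (f k x))"

definition Ibar :: "'x measure \<Rightarrow> (real^'s \<Rightarrow> 'x \<Rightarrow> 'y \<Rightarrow> real) \<Rightarrow> ('k::finite option \<Rightarrow> 'y)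
    \<Rightarrow> ('k option \<Rightarrow> real) \<Rightarrow> ('k option \<Rightarrow> 'x \<Rightarrow> real) \<Rightarrow> real^('s::finite + 'k::finite) \<Rightarrow> real^('s::finite+'k::finite)^('s+'k)" where
  "Ibar M \<psi> y r f lam = (\<Sum>k\<in>UNIV. r k *\<^sub>R
     (\<chi> i j. \<integral>x. - (hess (\<lambda>l. ln (p_star \<psi> y k x l)) lam $ i $ j) \<partial>(distr_k M f k)))"

definition Sigmabar :: "'x measure \<Rightarrow> (real^'s \<Rightarrow> 'x \<Rightarrow> 'y \<Rightarrow> real) \<Rightarrow> ('k::finite option \<Rightarrow> 'y)
    \<Rightarrow> ('k option \<Rightarrow> real) \<Rightarrow> ('k option \<Rightarrow> 'x \<Rightarrow> real) \<Rightarrow> real^('s::finite + 'k::finite) \<Rightarrow> real^('s::finite+'k::finite)^('s+'k)" where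
  "Sigmabar M \<psi> y r f lam = (\<Sum>k\<in>UNIV. r k *\<^sub>R
     cov_mat (distr_k M f k) (\<lambda>x. grad (\<lambda>l. ln (p_star \<psi> y k x l)) lam))"

definition Wblock :: "('k option \<Rightarrow> nat) \<Rightarrow> real^('s::finite + 'k::finite)^('s + 'k)" where
  "Wblock nk = (\<chi> a b. case (a, b) of
      (Inr k, Inr l) \<Rightarrow> (if k = l then 1 / real (nk (Some k)) else 0) + 1 / real (nk None)
    | _ \<Rightarrow> 0)"

definition theta_block :: "real^('s::finite + 'k::finite)^('s + 'k) \<Rightarrow> real^'s^'s" where
  "theta_block A = (\<chi> i j. A $ Inl i $ Inl j)"

end

theory Submission
  imports Defs
begin

text \<open>
  Write \<open>p_k(x)\<close> for the class posteriors at the true parameter \<open>\<lambda>\<^sup>\<circ>\<close>,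
  \<open>s_k(x)\<close> for the score of \<open>log p_k\<^sup>*\<close> and \<open>H_k(x)\<close> for its Hessian.  Three pointwise
  facts about the softmax \<open>p\<^sup>*\<close> drive everything: \<open>\<Sum>k p_k s_k = 0\<close>,
  \<open>\<Sum>k p_k (H_k + s_k s_k\<^sup>T) = 0\<close>, and \<open>s_k\<close> has \<open>\<gamma>\<^sup>*\<close>-coordinates \<open>\<delta>_k_j - p_j\<close>.
  By Bayes' rule \<open>r_k f_k = p_k \<Sum>l r_l f_l\<close>, so integrals \<open>\<Sum>k r_k E[h_k(X_k)]\<close> vanish
  whenever \<open>\<Sum>k p_k h_k = 0\<close> pointwise.  This gives the information identity
  \<open>Ibar = A := \<Sum>k r_k E[s_k s_k\<^sup>T]\<close>, hence \<open>Sigmabar = A - \<Sum>k r_k m_k m_k\<^sup>T\<close> with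
  \<open>m_k = E[s_k(X_k)]\<close>; it also gives \<open>A v_k = m_k\<close> for explicit directions \<open>v_k\<close> with
  \<open>W = \<Sum>k (r_k/n) v_k v_k\<^sup>T\<close>.  Part (a) is then \<open>I W I = n \<Sum>k r_k m_k m_k\<^sup>T = I - \<Sigma>\<close>,
  and part (b) follows from \<open>I\<^sup>-\<^sup>1 \<Sigma> I\<^sup>-\<^sup>1 = I\<^sup>-\<^sup>1 - W\<close> since \<open>W\<close> vanishes on the
  \<open>\<theta>\<close>-block.
\<close>

definition softmax_den :: "('k::finite option \<Rightarrow> real^'s::finite \<Rightarrow> real) \<Rightarrow> real^('s+'k) \<Rightarrow> real" where
  "softmax_den \<Psi> lam = (\<Sum>l\<in>UNIV. exp (gam lam l + \<Psi> l (theta_of lam)))"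

definition softmax :: "('k::finite option \<Rightarrow> real^'s::finite \<Rightarrow> real) \<Rightarrow> 'k option \<Rightarrow> real^('s+'k) \<Rightarrow> real" where
  "softmax \<Psi> k lam = exp (gam lam k + \<Psi> k (theta_of lam)) / softmax_den \<Psi> lam"

definition exponent_deriv :: "('k::finite option \<Rightarrow> real^'s::finite \<Rightarrow> real) \<Rightarrow> 'k option \<Rightarrow> 's + 'k \<Rightarrow> real^('s+'k) \<Rightarrow> real" where
  "exponent_deriv \<Psi> k i lam =
     (case i of Inl s \<Rightarrow> partial (\<Psi> k) s (theta_of lam) | Inr j \<Rightarrow> if k = Some j then 1 else 0)"

definition softmax_score :: "('k::finite option \<Rightarrow> real^'s::finite \<Rightarrow> real) \<Rightarrow> 'k option \<Rightarrow> 's + 'k \<Rightarrow> real^('s+'k) \<Rightarrow> real" where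
  "softmax_score \<Psi> k i lam =
     exponent_deriv \<Psi> k i lam - (\<Sum>l\<in>UNIV. softmax \<Psi> l lam * exponent_deriv \<Psi> l i lam)"

lemma softmax_den_pos: "0 < softmax_den \<Psi> lam"
  unfolding softmax_den_def by (intro sum_pos) auto

lemma softmax_pos: "0 < softmax \<Psi> k lam"
  unfolding softmax_def using softmax_den_pos[of \<Psi> lam] by simp

lemma softmax_sum: "(\<Sum>k\<in>UNIV. softmax \<Psi> k lam) = 1"
  unfolding softmax_def using softmax_den_pos[of \<Psi> lam]
  by (simp add: sum_divide_distrib[symmetric] softmax_den_def)

lemma softmax_le_1: "softmax \<Psi> k lam \<le> 1"
proof -
  have "softmax \<Psi> k lam \<le> (\<Sum>l\<in>UNIV. softmax \<Psi> l lam)"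
    by (rule member_le_sum) (auto intro: less_imp_le softmax_pos)
  then show ?thesis by (simp add: softmax_sum)
qed

lemma has_partials_axis_deriv:
  "has_partials g \<Longrightarrow> ((\<lambda>t. g (x + t *\<^sub>R axis i 1)) has_real_derivative partial g i x) (at 0)"
  unfolding has_partials_def partial_def using DERIV_deriv_iff_real_differentiable by blast

text \<open>Moving \<open>\<lambda>\<close> along a \<open>\<theta>\<close>-axis changes only \<open>\<Psi>\<close>, along a \<open>\<gamma>\<^sup>*\<close>-axis only one exponent.\<close>
lemma exponent_has_deriv:
  assumes "has_partials (\<Psi> l)"
  shows "((\<lambda>t. gam (lam + t *\<^sub>R axis i 1) l + \<Psi> l (theta_of (lam + t *\<^sub>R axis i 1)))
           has_real_derivative exponent_deriv \<Psi> l i lam) (at 0)"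
proof (cases i)
  case (Inl s)
  have "theta_of (lam + t *\<^sub>R axis i 1) = theta_of lam + t *\<^sub>R axis s 1"
    and "gam (lam + t *\<^sub>R axis i 1) l = gam lam l" for t
    by (auto simp: Inl vec_eq_iff theta_of_def gam_def axis_def split: option.splits)
  then show ?thesis
    using DERIV_add[OF DERIV_const has_partials_axis_deriv[OF assms]]
    by (simp add: Inl exponent_deriv_def)
next
  case (Inr j)
  have "theta_of (lam + t *\<^sub>R axis i 1) = theta_of lam"
    and "gam (lam + t *\<^sub>R axis i 1) l = gam lam l + t * (if l = Some j then 1 else 0)" for t
    by (auto simp: Inr vec_eq_iff theta_of_def gam_def axis_def split: option.splits)
  then show ?thesis
    by (auto simp: Inr exponent_deriv_def intro!: derivative_eq_intros)
qed

lemma DERIV_log_softmax: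
  fixes a :: "'l::finite \<Rightarrow> real \<Rightarrow> real"
  assumes "\<And>l. (a l has_real_derivative d l) (at t)"
  shows "((\<lambda>t. a k t - ln (\<Sum>l\<in>UNIV. exp (a l t))) has_real_derivative
          d k - (\<Sum>l\<in>UNIV. exp (a l t) * d l) / (\<Sum>l\<in>UNIV. exp (a l t))) (at t)"
proof -
  have "0 < (\<Sum>l\<in>UNIV. exp (a l t))" by (intro sum_pos) auto
  then show ?thesis
    by (auto intro!: derivative_eq_intros assms simp: divide_inverse mult.commute)
qed

lemma ln_softmax: "ln (softmax \<Psi> k lam) = gam lam k + \<Psi> k (theta_of lam) - ln (softmax_den \<Psi> lam)"
  unfolding softmax_def using softmax_den_pos[of \<Psi> lam] by (simp add: ln_div)

lemma log_softmax_has_deriv: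
  assumes "\<And>l. has_partials (\<Psi> l)"
  shows "((\<lambda>t. ln (softmax \<Psi> k (lam + t *\<^sub>R axis i 1))) has_real_derivative softmax_score \<Psi> k i lam) (at 0)"
proof -
  define a where "a l t = gam (lam + t *\<^sub>R axis i 1) l + \<Psi> l (theta_of (lam + t *\<^sub>R axis i 1))" for l t
  have "((\<lambda>t. a k t - ln (\<Sum>l\<in>UNIV. exp (a l t))) has_real_derivative
          exponent_deriv \<Psi> k i lam - (\<Sum>l\<in>UNIV. exp (a l 0) * exponent_deriv \<Psi> l i lam)
            / (\<Sum>l\<in>UNIV. exp (a l 0))) (at 0)"
    unfolding a_def by (intro DERIV_log_softmax exponent_has_deriv assms)
  moreover have "(\<lambda>t. ln (softmax \<Psi> k (lam + t *\<^sub>R axis i 1))) = (\<lambda>t. a k t - ln (\<Sum>l\<in>UNIV. exp (a l t)))"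
    by (simp add: a_def ln_softmax softmax_den_def)
  moreover have "(\<Sum>l\<in>UNIV. exp (a l 0) * exponent_deriv \<Psi> l i lam) / (\<Sum>l\<in>UNIV. exp (a l 0))
      = (\<Sum>l\<in>UNIV. softmax \<Psi> l lam * exponent_deriv \<Psi> l i lam)"
    by (simp add: a_def softmax_def softmax_den_def sum_divide_distrib)
  ultimately show ?thesis by (simp add: softmax_score_def)
qed

lemma partial_log_softmax:
  assumes "\<And>l. has_partials (\<Psi> l)"
  shows "partial (\<lambda>lam. ln (softmax \<Psi> k lam)) i = softmax_score \<Psi> k i"
  unfolding partial_def using log_softmax_has_deriv[OF assms] by (intro ext DERIV_imp_deriv)

lemma softmax_has_deriv:
  assumes "\<And>l. has_partials (\<Psi> l)"
  shows "((\<lambda>t. softmax \<Psi> k (lam + t *\<^sub>R axis i 1)) has_real_derivative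
           softmax \<Psi> k lam * softmax_score \<Psi> k i lam) (at 0)"
proof -
  have "(\<lambda>t. softmax \<Psi> k (lam + t *\<^sub>R axis i 1)) = (\<lambda>t. exp (ln (softmax \<Psi> k (lam + t *\<^sub>R axis i 1))))"
    by (simp add: softmax_pos)
  then show ?thesis
    using DERIV_chain2[OF DERIV_exp log_softmax_has_deriv[OF assms]] by (simp add: softmax_pos)
qed

lemma softmax_score_mean: "(\<Sum>k\<in>UNIV. softmax \<Psi> k lam * softmax_score \<Psi> k i lam) = 0"
  by (simp add: softmax_score_def right_diff_distrib sum_subtractf sum_distrib_right[symmetric] softmax_sum)

lemma softmax_score_Inr:
  "softmax_score \<Psi> k (Inr j) lam = (if k = Some j then 1 else 0) - softmax \<Psi> (Some j) lam"
  by (simp add: softmax_score_def exponent_deriv_def if_distrib cong: if_cong)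

lemma exponent_deriv_differentiable:
  assumes "\<And>s. has_partials (partial (\<Psi> l) s)"
  shows "(\<lambda>t. exponent_deriv \<Psi> l j (lam + t *\<^sub>R axis i 1)) differentiable (at 0)"
proof (cases j)
  case (Inl s)
  show ?thesis
  proof (cases i)
    case (Inl s')
    have "theta_of (lam + t *\<^sub>R axis i 1) = theta_of lam + t *\<^sub>R axis s' 1" for t
      by (simp add: Inl vec_eq_iff theta_of_def axis_def)
    then show ?thesis
      using assms[of s] by (simp add: exponent_deriv_def \<open>j = Inl s\<close> has_partials_def)
  next
    case (Inr j')
    have "theta_of (lam + t *\<^sub>R axis i 1) = theta_of lam" for t
      by (simp add: Inr vec_eq_iff theta_of_def axis_def)
    then show ?thesis by (simp add: exponent_deriv_def \<open>j = Inl s\<close>)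
  qed
qed (simp add: exponent_deriv_def)

lemma softmax_score_differentiable:
  assumes "\<And>l. has_partials (\<Psi> l)" and "\<And>l s. has_partials (partial (\<Psi> l) s)"
  shows "(\<lambda>t. softmax_score \<Psi> k j (lam + t *\<^sub>R axis i 1)) differentiable (at 0)"
proof -
  have "(\<lambda>t. softmax \<Psi> l (lam + t *\<^sub>R axis i 1)) differentiable (at 0)" for l
    using softmax_has_deriv[of \<Psi>, OF assms(1)] real_differentiable_def by blast
  then show ?thesis
    unfolding softmax_score_def
    by (intro derivative_intros exponent_deriv_differentiable assms(2) ballI) simp
qed

text \<open>Second Bartlett identity for the class probabilities: differentiating the mean-zero
  property once more gives \<open>\<Sum>k p_k (\<partial>_i score_k_j + score_k_i score_k_j) = 0\<close>.\<close>
lemma softmax_hessian_identity: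
  assumes "\<And>l. has_partials (\<Psi> l)" and "\<And>l s. has_partials (partial (\<Psi> l) s)"
  shows "(\<Sum>k\<in>UNIV. softmax \<Psi> k lam *
           (partial (softmax_score \<Psi> k j) i lam + softmax_score \<Psi> k i lam * softmax_score \<Psi> k j lam)) = 0"
proof -
  have dscore: "((\<lambda>t. softmax_score \<Psi> k j (lam + t *\<^sub>R axis i 1)) has_real_derivative
      partial (softmax_score \<Psi> k j) i lam) (at 0)" for k
    unfolding partial_def using softmax_score_differentiable[OF assms]
    by (simp add: DERIV_deriv_iff_real_differentiable)
  have "((\<lambda>t. \<Sum>k\<in>UNIV. softmax \<Psi> k (lam + t *\<^sub>R axis i 1) * softmax_score \<Psi> k j (lam + t *\<^sub>R axis i 1))
      has_real_derivative (\<Sum>k\<in>UNIV. softmax \<Psi> k lam * partial (softmax_score \<Psi> k j) i lam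
          + softmax \<Psi> k lam * softmax_score \<Psi> k i lam * softmax_score \<Psi> k j lam)) (at 0)"
    using DERIV_sum[OF DERIV_mult'[OF softmax_has_deriv[of \<Psi>, OF assms(1)] dscore]] by simp
  then have "((\<lambda>t. 0) has_real_derivative (\<Sum>k\<in>UNIV. softmax \<Psi> k lam *
      (partial (softmax_score \<Psi> k j) i lam + softmax_score \<Psi> k i lam * softmax_score \<Psi> k j lam))) (at 0)"
    by (simp add: softmax_score_mean algebra_simps)
  then show ?thesis using DERIV_const DERIV_unique by blast
qed

text \<open>A partial derivative of a measurable family of functions is measurable: it is the
  pointwise limit of the difference quotients with step \<open>1/(n+1)\<close>.\<close>
lemma borel_measurable_partial:
  assumes meas: "\<And>lam. (\<lambda>x. h x lam) \<in> borel_measurable M"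
    and diff: "\<And>x. x \<in> space M \<Longrightarrow> (\<lambda>t. h x (lam + t *\<^sub>R axis i 1)) differentiable (at 0)"
  shows "(\<lambda>x. partial (h x) i lam) \<in> borel_measurable M"
proof (rule borel_measurable_LIMSEQ_real)
  fix x assume "x \<in> space M"
  then have "((\<lambda>t. (h x (lam + t *\<^sub>R axis i 1) - h x lam) / t) \<longlongrightarrow> partial (h x) i lam) (at 0)"
    using diff unfolding partial_def by (simp add: DERIV_deriv_iff_real_differentiable[symmetric] DERIV_def)
  moreover have "filterlim (\<lambda>n. 1 / real (Suc n)) (at 0) sequentially"
    unfolding filterlim_at using LIMSEQ_inverse_real_of_nat by (simp add: inverse_eq_divide)
  ultimately show "(\<lambda>n. (h x (lam + (1 / real (Suc n)) *\<^sub>R axis i 1) - h x lam) / (1 / real (Suc n)))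
      \<longlonglongrightarrow> partial (h x) i lam"
    by (rule filterlim_compose)
qed (use meas in measurable)

lemma density_mixture_integral_zero:
  fixes f p h :: "'l::finite \<Rightarrow> 'x \<Rightarrow> real"
  assumes f_meas: "\<And>l. f l \<in> borel_measurable M"
    and f_nonneg: "\<And>l x. x \<in> space M \<Longrightarrow> 0 \<le> f l x"
    and h_meas: "\<And>l. h l \<in> borel_measurable M"
    and h_int: "\<And>l. integrable (density M (\<lambda>x. ennreal (f l x))) (h l)"
    and factor: "\<And>l x. x \<in> space M \<Longrightarrow> r l * f l x = p l x * g x"
    and cancel: "\<And>x. x \<in> space M \<Longrightarrow> (\<Sum>l\<in>UNIV. p l x * h l x) = 0"
  shows "(\<Sum>l\<in>UNIV. r l * (\<integral>x. h l x \<partial>density M (\<lambda>x. ennreal (f l x)))) = 0"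
proof -
  have f_AE: "AE x in M. 0 \<le> f l x" for l
    using f_nonneg by (rule AE_I2)
  have int_M: "integrable M (\<lambda>x. r l * (f l x * h l x))" for l
    using h_int[of l] integrable_density[OF h_meas f_meas f_AE] by simp
  have "(\<Sum>l\<in>UNIV. r l * (\<integral>x. h l x \<partial>density M (\<lambda>x. ennreal (f l x))))
      = (\<Sum>l\<in>UNIV. \<integral>x. r l * (f l x * h l x) \<partial>M)"
    by (simp add: integral_density[OF h_meas f_meas f_AE])
  also have "\<dots> = (\<integral>x. (\<Sum>l\<in>UNIV. r l * (f l x * h l x)) \<partial>M)"
    using int_M by (simp add: integral_sum)
  also have "\<dots> = (\<integral>x. g x * (\<Sum>l\<in>UNIV. p l x * h l x) \<partial>M)"
  proof (intro Bochner_Integration.integral_cong refl)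
    fix x assume x: "x \<in> space M"
    have "r l * (f l x * h l x) = g x * (p l x * h l x)" for l
      using factor[OF x, of l] by (metis mult.assoc mult.commute)
    then show "(\<Sum>l\<in>UNIV. r l * (f l x * h l x)) = g x * (\<Sum>l\<in>UNIV. p l x * h l x)"
      unfolding sum_distrib_left by (intro sum.cong refl)
  qed
  also have "\<dots> = 0"
    using cancel by (simp add: Bochner_Integration.integral_cong[of M M _ "\<lambda>_. 0"])
  finally show ?thesis .
qed

lemma prob_space_density_ennreal:
  assumes "f \<in> borel_measurable M" and "(\<integral>\<^sup>+x. ennreal (f x) \<partial>M) = 1"
  shows "prob_space (density M (\<lambda>x. ennreal (f x)))"
proof (rule prob_spaceI)
  have "emeasure (density M (\<lambda>x. ennreal (f x))) (space M)
      = (\<integral>\<^sup>+x. ennreal (f x) * indicator (space M) x \<partial>M)"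
    using assms(1) by (simp add: emeasure_density)
  also have "\<dots> = (\<integral>\<^sup>+x. ennreal (f x) \<partial>M)"
    by (intro nn_integral_cong) simp
  also have "\<dots> = 1"
    by (rule assms(2))
  finally show "emeasure (density M (\<lambda>x. ennreal (f x))) (space (density M (\<lambda>x. ennreal (f x)))) = 1"
    by simp
qed

lemma (in prob_space) covariance_expand:
  fixes a b :: "'a \<Rightarrow> real"
  assumes "integrable M a" "integrable M b" "integrable M (\<lambda>x. a x * b x)"
  shows "(\<integral>x. (a x - expectation a) * (b x - expectation b) \<partial>M)
       = expectation (\<lambda>x. a x * b x) - expectation a * expectation b"
proof -
  have "(a x - expectation a) * (b x - expectation b)
      = a x * b x - expectation b * a x - expectation a * b x + expectation a * expectation b" for x
    by algebra
  then show ?thesis using assms by (simp add: prob_space)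
qed

definition outer :: "real^'n::finite \<Rightarrow> real^'m::finite \<Rightarrow> real^'m^'n" where
  "outer u v = (\<chi> i j. u $ i * v $ j)"

lemma outer_scaleR: "outer (a *\<^sub>R u) (a *\<^sub>R u) = (a * a) *\<^sub>R outer u u"
  by (simp add: outer_def vec_eq_iff mult_ac)

lemma sum_product_exchange:
  fixes u :: "'k \<Rightarrow> 'a \<Rightarrow> real" and X Y :: "'a \<Rightarrow> real" and c :: "'k \<Rightarrow> real"
  assumes "finite A" "finite B" "finite K"
  shows "(\<Sum>b\<in>B. (\<Sum>a\<in>A. X a * (\<Sum>k\<in>K. c k * (u k a * u k b))) * Y b)
       = (\<Sum>k\<in>K. c k * (\<Sum>a\<in>A. X a * u k a) * (\<Sum>b\<in>B. Y b * u k b))"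
proof -
  have "(\<Sum>b\<in>B. (\<Sum>a\<in>A. X a * (\<Sum>k\<in>K. c k * (u k a * u k b))) * Y b)
      = (\<Sum>b\<in>B. \<Sum>a\<in>A. \<Sum>k\<in>K. c k * X a * u k a * Y b * u k b)"
    by (simp add: sum_distrib_left sum_distrib_right mult_ac)
  also have "\<dots> = (\<Sum>a\<in>A. \<Sum>k\<in>K. \<Sum>b\<in>B. c k * X a * u k a * Y b * u k b)"
    by (subst sum.swap) (intro sum.cong refl sum.swap)
  also have "\<dots> = (\<Sum>k\<in>K. \<Sum>a\<in>A. \<Sum>b\<in>B. c k * X a * u k a * Y b * u k b)"
    by (rule sum.swap)
  also have "\<dots> = (\<Sum>k\<in>K. c k * (\<Sum>a\<in>A. X a * u k a) * (\<Sum>b\<in>B. Y b * u k b))"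
    by (simp add: sum_distrib_left sum_distrib_right mult_ac)
  finally show ?thesis .
qed

lemma sandwich_sum_outer:
  fixes A :: "real^'n::finite^'n" and v :: "'l \<Rightarrow> real^'n"
  assumes "finite L" and sym: "\<And>i j. A $ i $ j = A $ j $ i"
  shows "A ** (\<Sum>k\<in>L. c k *\<^sub>R outer (v k) (v k)) ** A = (\<Sum>k\<in>L. c k *\<^sub>R outer (A *v v k) (A *v v k))"
proof (intro iffD2[OF vec_eq_iff] allI)
  fix i j
  let ?S = "\<Sum>k\<in>L. c k *\<^sub>R outer (v k) (v k)"
  have "(A ** ?S ** A) $ i $ j = (\<Sum>b\<in>UNIV. (\<Sum>a\<in>UNIV. A $ i $ a * ?S $ a $ b) * A $ b $ j)"
    by (simp add: matrix_matrix_mult_def)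
  also have "\<dots> = (\<Sum>b\<in>UNIV. (\<Sum>a\<in>UNIV. A $ i $ a * (\<Sum>k\<in>L. c k * (v k $ a * v k $ b))) * A $ j $ b)"
    by (simp add: outer_def sym[of _ j])
  also have "\<dots> = (\<Sum>k\<in>L. c k * (\<Sum>a\<in>UNIV. A $ i $ a * v k $ a) * (\<Sum>b\<in>UNIV. A $ j $ b * v k $ b))"
    using \<open>finite L\<close> by (intro sum_product_exchange) auto
  also have "\<dots> = (\<Sum>k\<in>L. c k *\<^sub>R outer (A *v v k) (A *v v k)) $ i $ j"
    by (simp add: outer_def matrix_vector_mult_def mult.assoc)
  finally show "(A ** ?S ** A) $ i $ j = (\<Sum>k\<in>L. c k *\<^sub>R outer (A *v v k) (A *v v k)) $ i $ j" .
qed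

lemma pos_def_invertible:
  assumes "pos_def A"
  shows "invertible A"
proof -
  have "A *v x = 0 \<Longrightarrow> x = 0" for x
    using assms unfolding pos_def_def by (metis inner_zero_right less_irrefl)
  then show ?thesis
    by (simp add: matrix_left_invertible_ker invertible_left_inverse)
qed

lemma matrix_inv_inverse:
  assumes "invertible A"
  shows "A ** matrix_inv A = mat 1" and "matrix_inv A ** A = mat 1"
  using someI_ex[OF assms[unfolded invertible_def]] by (simp_all add: matrix_inv_def)

lemma matrix_diff_ldistrib: "(A::real^'n::finite^'m) ** (B - C) = A ** B - A ** C"
  by (simp add: matrix_matrix_mult_def vec_eq_iff sum_subtractf algebra_simps)

lemma matrix_diff_rdistrib: "((B::real^'n::finite^'m) - C) ** A = B ** A - C ** A"
  by (simp add: matrix_matrix_mult_def vec_eq_iff sum_subtractf algebra_simps)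

lemma inverse_sandwich:
  fixes I S W :: "real^'n::finite^'n"
  assumes "invertible I" and "I - S = I ** W ** I"
  shows "matrix_inv I ** S ** matrix_inv I = matrix_inv I - W"
proof -
  have "S = I - I ** W ** I" using assms(2) by (simp add: algebra_simps)
  then have "matrix_inv I ** S ** matrix_inv I
      = (matrix_inv I ** I - matrix_inv I ** I ** W ** I) ** matrix_inv I"
    by (simp add: matrix_diff_ldistrib matrix_mul_assoc)
  also have "\<dots> = matrix_inv I - W"
    using matrix_inv_inverse[OF assms(1)] by (simp add: matrix_diff_rdistrib matrix_mul_assoc[symmetric])
  finally show ?thesis .
qed

lemma theta_block_minus_Wblock: "theta_block (A - Wblock nk) = theta_block A"
  by (simp add: theta_block_def Wblock_def vec_eq_iff)

lemma sum_Plus_UNIV: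
  "(\<Sum>b\<in>(UNIV::('a::finite + 'b::finite) set). F b) = (\<Sum>a\<in>UNIV. F (Inl a)) + (\<Sum>c\<in>UNIV. F (Inr c))"
  using sum.Plus[of "UNIV::'a set" "UNIV::'b set" F] by (simp add: comp_def)

lemma sum_option_UNIV: "(\<Sum>k\<in>(UNIV::'a::finite option set). F k) = F None + (\<Sum>j\<in>UNIV. F (Some j))"
  by (simp add: UNIV_option_conv sum.reindex)

text \<open>The direction \<open>v_k\<close> in the \<open>\<gamma>\<^sup>*\<close>-coordinates whose inner product with the score of class
  \<open>l\<close> is \<open>(\<delta>_l_k - p_k)/r_k\<close>; the matrix \<open>W\<close> is a weighted sum of the \<open>v_k v_k\<^sup>T\<close>.\<close>
definition class_dir :: "('k::finite option \<Rightarrow> real) \<Rightarrow> 'k option \<Rightarrow> real^('s::finite + 'k)" where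
  "class_dir r k = (\<chi> b. case b of Inl _ \<Rightarrow> 0
      | Inr j \<Rightarrow> (if k = Some j then 1 / r k else 0) - (if k = None then 1 / r None else 0))"

text \<open>With \<open>n_k = r_k n\<close>: \<open>W = \<Sum>k (r_k / n) v_k v_k\<^sup>T\<close>; the \<open>k = 0\<close> term produces the
  constant \<open>1/n_0\<close>, the other terms the diagonal \<open>\<delta>_k_l / n_k\<close>.\<close>
lemma Wblock_outer:
  fixes nk :: "'k::finite option \<Rightarrow> nat" and r :: "'k option \<Rightarrow> real"
  assumes nk: "\<And>k. real (nk k) = r k * real n" and "0 < n" and r_pos: "\<And>k. 0 < r k"
  shows "(Wblock nk :: real^('s::finite + 'k)^('s + 'k))
           = (\<Sum>k\<in>UNIV. (r k / real n) *\<^sub>R outer (class_dir r k) (class_dir r k))"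
proof (intro iffD2[OF vec_eq_iff] allI)
  fix a b :: "'s::finite + 'k::finite"
  have n: "0 < real n" using \<open>0 < n\<close> by simp
  show "Wblock nk $ a $ b = (\<Sum>k\<in>UNIV. (r k / real n) *\<^sub>R outer (class_dir r k) (class_dir r k)) $ a $ b"
  proof (cases "\<exists>a' b'. a = Inr a' \<and> b = Inr b'")
    case True
    then obtain a' b' where ab: "a = Inr a'" "b = Inr b'" by blast
    have "r None / real n * (class_dir r None $ a * class_dir r None $ b) = 1 / real (nk None)"
      using r_pos[of None] n by (simp add: ab class_dir_def nk)
    moreover have "r (Some j) / real n * (class_dir r (Some j) $ a * class_dir r (Some j) $ b)
        = (if j = a' \<and> a' = b' then 1 / real (nk (Some a')) else 0)" for j
      using r_pos n by (auto simp: ab class_dir_def nk)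
    ultimately show ?thesis
      by (simp add: sum_option_UNIV outer_def Wblock_def ab)
  next
    case False
    then show ?thesis
      by (cases a; cases b) (simp_all add: Wblock_def outer_def class_dir_def)
  qed
qed

locale association_model =
  fixes M :: "'x measure"
    and \<psi> :: "real^'s::finite \<Rightarrow> 'x \<Rightarrow> 'y \<Rightarrow> real"
    and y :: "'k::finite option \<Rightarrow> 'y"
    and \<theta>0 :: "real^'s"
    and f :: "'k option \<Rightarrow> 'x \<Rightarrow> real"
    and \<beta> :: "'x \<Rightarrow> real"
    and \<epsilon> :: "'k option \<Rightarrow> real"
    and r :: "'k option \<Rightarrow> real"
  assumes psi_meas: "\<And>\<theta> k. (\<lambda>x. \<psi> \<theta> x (y k)) \<in> borel_measurable M"
    and psi_C3: "\<And>x k. x \<in> space M \<Longrightarrow> C3_fun (\<lambda>\<theta>. \<psi> \<theta> x (y k))"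
    and f_meas: "\<And>k. f k \<in> borel_measurable M"
    and f_pos: "\<And>k x. x \<in> space M \<Longrightarrow> 0 < f k x"
    and f_prob: "\<And>k. (\<integral>\<^sup>+x. ennreal (f k x) \<partial>M) = 1"
    and f_form: "\<And>k x. x \<in> space M \<Longrightarrow> ln (f k x) = \<beta> x + \<psi> \<theta>0 x (y k) - \<epsilon> k"
    and r_pos: "\<And>k. 0 < r k"
    and grad_sq: "\<And>k. (\<integral>\<^sup>+x. ennreal ((norm (grad (\<lambda>l. ln (p_star \<psi> y k x l)) (true_param \<theta>0 r \<epsilon>)))\<^sup>2)
                        \<partial>(distr_k M f k)) < \<infinity>"
    and hess_int: "\<And>k. (\<integral>\<^sup>+x. ennreal (norm (hess (\<lambda>l. ln (p_star \<psi> y k x l)) (true_param \<theta>0 r \<epsilon>)))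
                        \<partial>(distr_k M f k)) < \<infinity>"
begin

abbreviation lam0 :: "real^('s + 'k)" where
  "lam0 \<equiv> true_param \<theta>0 r \<epsilon>"

definition log_odds :: "'x \<Rightarrow> 'k option \<Rightarrow> real^'s \<Rightarrow> real" where
  "log_odds x = (\<lambda>k \<theta>. \<psi> \<theta> x (y k))"

definition posterior :: "'k option \<Rightarrow> 'x \<Rightarrow> real" where
  "posterior k x = p_star \<psi> y k x lam0"

definition score :: "'k option \<Rightarrow> 'x \<Rightarrow> real^('s + 'k)" where
  "score k x = grad (\<lambda>l. ln (p_star \<psi> y k x l)) lam0"

definition hessian :: "'k option \<Rightarrow> 'x \<Rightarrow> real^('s + 'k)^('s + 'k)" where
  "hessian k x = hess (\<lambda>l. ln (p_star \<psi> y k x l)) lam0"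

definition mean_score :: "'k option \<Rightarrow> real^('s + 'k)" where
  "mean_score k = (\<chi> i. \<integral>x. score k x $ i \<partial>distr_k M f k)"

definition score_moment :: "real^('s + 'k)^('s + 'k)" where
  "score_moment = (\<chi> i j. \<Sum>k\<in>UNIV. r k * (\<integral>x. score k x $ i * score k x $ j \<partial>distr_k M f k))"

lemma p_star_softmax: "p_star \<psi> y k x = softmax (log_odds x) k"
  by (rule ext) (simp add: p_star_def softmax_def softmax_den_def log_odds_def)

lemma log_odds_partials:
  assumes "x \<in> space M"
  shows "has_partials (log_odds x k)" and "has_partials (partial (log_odds x k) s)"
  using psi_C3[OF assms, of k] by (simp_all add: log_odds_def C3_fun_def C1_fun_def)

lemma score_eq: "x \<in> space M \<Longrightarrow> score k x $ i = softmax_score (log_odds x) k i lam0"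
  by (simp add: score_def grad_def p_star_softmax partial_log_softmax log_odds_partials)

lemma hessian_eq: "x \<in> space M \<Longrightarrow> hessian k x $ i $ j = partial (softmax_score (log_odds x) k j) i lam0"
  by (simp add: hessian_def hess_def p_star_softmax partial_log_softmax log_odds_partials)

lemma posterior_eq: "posterior k x = softmax (log_odds x) k lam0"
  by (simp add: posterior_def p_star_softmax)

lemma score_mean_zero: "x \<in> space M \<Longrightarrow> (\<Sum>k\<in>UNIV. posterior k x * score k x $ i) = 0"
  by (simp add: posterior_eq score_eq softmax_score_mean)

lemma hessian_identity:
  "x \<in> space M \<Longrightarrow> (\<Sum>k\<in>UNIV. posterior k x * (hessian k x $ i $ j + score k x $ i * score k x $ j)) = 0"
  by (simp add: posterior_eq score_eq hessian_eq softmax_hessian_identity log_odds_partials)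

lemma score_Inr: "x \<in> space M \<Longrightarrow> score k x $ Inr j = (if k = Some j then 1 else 0) - posterior (Some j) x"
  by (simp add: score_eq posterior_eq softmax_score_Inr)

lemma posterior_factor:
  assumes x: "x \<in> space M"
  shows "r k * f k x = posterior k x * (\<Sum>l\<in>UNIV. r l * f l x)"
proof -
  define C where "C = exp (\<epsilon> None - \<beta> x) / r None"
  have C: "0 < C" using r_pos by (simp add: C_def)
  have theta0: "theta_of lam0 = \<theta>0"
    by (simp add: theta_of_def true_param_def vec_eq_iff)
  have "gam lam0 l + \<psi> \<theta>0 x (y l) = ln (r l) + ln (f l x) + (\<epsilon> None - \<beta> x) - ln (r None)" for l
    using f_form[OF x, of l] by (auto simp: gam_def true_param_def split: option.splits)
  then have exps: "exp (gam lam0 l + \<psi> \<theta>0 x (y l)) = r l * f l x * C" for l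
    using r_pos f_pos[OF x] by (simp add: C_def exp_add exp_diff)
  have mix_pos: "0 < (\<Sum>l\<in>UNIV. r l * f l x)"
    using r_pos f_pos[OF x] by (intro sum_pos) auto
  have "posterior k x = (r k * f k x * C) / (\<Sum>l\<in>UNIV. r l * f l x * C)"
    by (simp add: posterior_def p_star_def theta0 exps)
  also have "\<dots> = r k * f k x / (\<Sum>l\<in>UNIV. r l * f l x)"
    using C by (simp add: sum_distrib_right[symmetric])
  finally show ?thesis using mix_pos by simp
qed

lemma posterior_nonneg: "0 \<le> posterior k x"
  by (simp add: posterior_eq softmax_pos less_imp_le)

lemma posterior_le_1: "posterior k x \<le> 1"
  by (simp add: posterior_eq softmax_le_1)

lemma posterior_sum: "(\<Sum>k\<in>UNIV. posterior k x) = 1"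
  by (simp add: posterior_eq softmax_sum)

lemma ln_p_star_measurable: "(\<lambda>x. ln (p_star \<psi> y k x lam)) \<in> borel_measurable M"
  unfolding p_star_def using psi_meas by measurable

lemma posterior_measurable [measurable]: "posterior k \<in> borel_measurable M"
  unfolding posterior_def p_star_def using psi_meas by measurable

lemma partial_ln_p_star_measurable:
  "(\<lambda>x. partial (\<lambda>l. ln (p_star \<psi> y k x l)) j lam) \<in> borel_measurable M"
proof (rule borel_measurable_partial[OF ln_p_star_measurable])
  fix x assume "x \<in> space M"
  then show "(\<lambda>t. ln (p_star \<psi> y k x (lam + t *\<^sub>R axis j 1))) differentiable (at 0)"
    using log_softmax_has_deriv[of "log_odds x", OF log_odds_partials(1)]
    by (auto simp: p_star_softmax real_differentiable_def)
qed

lemma score_measurable [measurable]: "(\<lambda>x. score k x $ i) \<in> borel_measurable M"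
  unfolding score_def grad_def using partial_ln_p_star_measurable by simp

lemma hessian_measurable [measurable]: "(\<lambda>x. hessian k x $ i $ j) \<in> borel_measurable M"
proof -
  have "(\<lambda>x. partial (\<lambda>lam. partial (\<lambda>l. ln (p_star \<psi> y k x l)) j lam) i lam0) \<in> borel_measurable M"
  proof (rule borel_measurable_partial[OF partial_ln_p_star_measurable])
    fix x assume x: "x \<in> space M"
    show "(\<lambda>t. partial (\<lambda>l. ln (p_star \<psi> y k x l)) j (lam0 + t *\<^sub>R axis i 1)) differentiable (at 0)"
      using softmax_score_differentiable[of "log_odds x", OF log_odds_partials[OF x]]
      by (simp add: p_star_softmax partial_log_softmax log_odds_partials[OF x])
  qed
  then show ?thesis by (simp add: hessian_def hess_def)
qed

lemma class_prob_space: "prob_space (distr_k M f k)"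
  unfolding distr_k_def using f_meas f_prob by (rule prob_space_density_ennreal)

lemma measurable_class [measurable (raw)]:
  "h \<in> borel_measurable M \<Longrightarrow> h \<in> borel_measurable (distr_k M f k)"
  by (simp add: distr_k_def)

lemma integrable_score_product: "integrable (distr_k M f k) (\<lambda>x. score k x $ i * score k x $ j)"
proof (rule integrableI_bounded)
  have "\<bar>score k x $ i\<bar> * \<bar>score k x $ j\<bar> \<le> norm (score k x) * norm (score k x)" for x
    by (intro mult_mono component_le_norm_cart) auto
  then have "(\<integral>\<^sup>+x. ennreal (norm (score k x $ i * score k x $ j)) \<partial>distr_k M f k)
      \<le> (\<integral>\<^sup>+x. ennreal ((norm (score k x))\<^sup>2) \<partial>distr_k M f k)"
    by (intro nn_integral_mono ennreal_leI) (simp add: abs_mult power2_eq_square)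
  also have "\<dots> < \<infinity>"
    using grad_sq[of k] by (simp add: score_def)
  finally show "(\<integral>\<^sup>+x. ennreal (norm (score k x $ i * score k x $ j)) \<partial>distr_k M f k) < \<infinity>" .
qed measurable

lemma integrable_score: "integrable (distr_k M f k) (\<lambda>x. score k x $ i)"
proof (rule Bochner_Integration.integrable_bound)
  interpret prob_space "distr_k M f k" by (rule class_prob_space)
  show "integrable (distr_k M f k) (\<lambda>x. 1 + score k x $ i * score k x $ i)"
    using integrable_score_product by simp
  have "\<bar>t\<bar> \<le> 1 + t * t" for t :: real
  proof -
    have "0 \<le> (\<bar>t\<bar> - 1) * (\<bar>t\<bar> - 1)" by simp
    then show ?thesis by (simp add: algebra_simps abs_mult_self_eq)
  qed
  then show "AE x in distr_k M f k. norm (score k x $ i) \<le> norm (1 + score k x $ i * score k x $ i)"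
    by (intro AE_I2) (simp add: add_nonneg_nonneg)
qed measurable

lemma integrable_hessian: "integrable (distr_k M f k) (\<lambda>x. hessian k x $ i $ j)"
proof (rule integrableI_bounded)
  have "norm (hessian k x $ i $ j) \<le> norm (hessian k x)" for x
    using Finite_Cartesian_Product.norm_nth_le[of "hessian k x $ i" j]
      Finite_Cartesian_Product.norm_nth_le[of "hessian k x" i] by linarith
  then have "(\<integral>\<^sup>+x. ennreal (norm (hessian k x $ i $ j)) \<partial>distr_k M f k)
      \<le> (\<integral>\<^sup>+x. ennreal (norm (hessian k x)) \<partial>distr_k M f k)"
    by (intro nn_integral_mono ennreal_leI)
  also have "\<dots> < \<infinity>"
    using hess_int[of k] by (simp add: hessian_def)
  finally show "(\<integral>\<^sup>+x. ennreal (norm (hessian k x $ i $ j)) \<partial>distr_k M f k) < \<infinity>" .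
qed measurable

lemma integrable_score_posterior: "integrable (distr_k M f l) (\<lambda>x. score l x $ i * posterior k x)"
proof (rule Bochner_Integration.integrable_bound[OF integrable_score])
  show "AE x in distr_k M f l. norm (score l x $ i * posterior k x) \<le> norm (score l x $ i)"
    using posterior_nonneg posterior_le_1
    by (intro AE_I2) (simp add: abs_mult mult_left_le)
qed measurable

lemma weighted_class_integral_zero:
  assumes "\<And>l. h l \<in> borel_measurable M"
    and "\<And>l. integrable (distr_k M f l) (h l)"
    and "\<And>x. x \<in> space M \<Longrightarrow> (\<Sum>l\<in>UNIV. posterior l x * h l x) = 0"
  shows "(\<Sum>l\<in>UNIV. r l * (\<integral>x. h l x \<partial>distr_k M f l)) = 0"
  using assms f_meas f_pos posterior_factor unfolding distr_k_def
  by (intro density_mixture_integral_zero[where p = posterior]) (auto intro: less_imp_le)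

text \<open>Information identity: the averaged observed information equals the averaged second
  moment of the score (the expectation of the Hessian is \<open>-E[s s\<^sup>T]\<close> after mixing the classes).\<close>
lemma information_identity: "Ibar M \<psi> y r f lam0 = score_moment"
proof (intro iffD2[OF vec_eq_iff] allI)
  fix i j
  let ?P = "distr_k M f"
  have "(\<Sum>l\<in>UNIV. r l * (\<integral>x. hessian l x $ i $ j + score l x $ i * score l x $ j \<partial>?P l)) = 0"
    using hessian_identity
    by (intro weighted_class_integral_zero Bochner_Integration.integrable_add
          integrable_hessian integrable_score_product) auto
  then have "(\<Sum>l\<in>UNIV. r l * (\<integral>x. hessian l x $ i $ j \<partial>?P l))
      + (\<Sum>l\<in>UNIV. r l * (\<integral>x. score l x $ i * score l x $ j \<partial>?P l)) = 0"
    by (simp add: integrable_hessian integrable_score_product distrib_left sum.distrib)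
  then show "Ibar M \<psi> y r f lam0 $ i $ j = score_moment $ i $ j"
    by (simp add: Ibar_def score_moment_def hessian_def[symmetric] sum_negf)
qed

lemma Sigmabar_eq:
  "Sigmabar M \<psi> y r f lam0 = score_moment - (\<Sum>k\<in>UNIV. r k *\<^sub>R outer (mean_score k) (mean_score k))"
proof (intro iffD2[OF vec_eq_iff] allI)
  fix i j
  have "cov_mat (distr_k M f k) (score k) $ i $ j
      = (\<integral>x. score k x $ i * score k x $ j \<partial>distr_k M f k) - mean_score k $ i * mean_score k $ j" for k
    unfolding cov_mat_def mean_score_def
    by (simp add: prob_space.covariance_expand[OF class_prob_space]
          integrable_score integrable_score_product)
  then show "Sigmabar M \<psi> y r f lam0 $ i $ j
      = (score_moment - (\<Sum>k\<in>UNIV. r k *\<^sub>R outer (mean_score k) (mean_score k))) $ i $ j"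
    by (simp add: Sigmabar_def score_def[symmetric] score_moment_def outer_def
          right_diff_distrib sum_subtractf)
qed

lemma score_moment_symmetric: "score_moment $ i $ j = score_moment $ j $ i"
  by (simp add: score_moment_def mult.commute)

abbreviation dir :: "'k option \<Rightarrow> real^('s + 'k)" where
  "dir k \<equiv> class_dir r k"

lemma score_dot_class_dir:
  assumes x: "x \<in> space M"
  shows "(\<Sum>b\<in>UNIV. score l x $ b * dir k $ b) = ((if l = k then 1 else 0) - posterior k x) / r k"
proof -
  have "(\<Sum>b\<in>UNIV. score l x $ b * dir k $ b)
      = (\<Sum>j\<in>UNIV. ((if l = Some j then 1 else 0) - posterior (Some j) x) * dir k $ Inr j)"
    by (simp add: sum_Plus_UNIV class_dir_def score_Inr[OF x])
  also have "\<dots> = ((if l = k then 1 else 0) - posterior k x) / r k"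
  proof (cases k)
    case None
    have "(\<Sum>j\<in>UNIV. ((if l = Some j then 1 else 0) - posterior (Some j) x) * dir k $ Inr j)
        = ((\<Sum>j\<in>UNIV. if l = Some j then 1 else 0) - (\<Sum>j\<in>UNIV. posterior (Some j) x)) * - (1 / r None)"
      by (simp add: None class_dir_def sum_negf sum_divide_distrib[symmetric] sum_subtractf)
    also have "(\<Sum>j\<in>UNIV. if l = Some j then 1 else 0) = (if l = None then 0 else 1 :: real)"
      by (cases l) auto
    also have "(\<Sum>j\<in>UNIV. posterior (Some j) x) = 1 - posterior None x"
      using posterior_sum[of x] by (simp add: sum_option_UNIV)
    also have "((if l = None then 0 else 1) - (1 - posterior None x)) * - (1 / r None)
        = ((if l = k then 1 else 0) - posterior k x) / r k"
      by (simp add: None diff_divide_distrib)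
    finally show ?thesis .
  next
    case (Some j0)
    have "((if l = Some j then 1 else 0) - posterior (Some j) x) * dir k $ Inr j
        = (if j = j0 then ((if l = k then 1 else 0) - posterior k x) / r k else 0)" for j
      by (auto simp: Some class_dir_def)
    then show ?thesis by simp
  qed
  finally show ?thesis .
qed

lemma class_moment_dir:
  "(\<Sum>b\<in>UNIV. (\<integral>x. score l x $ i * score l x $ b \<partial>distr_k M f l) * dir k $ b)
     = ((if l = k then mean_score l $ i else 0) - (\<integral>x. score l x $ i * posterior k x \<partial>distr_k M f l)) / r k"
proof -
  let ?P = "distr_k M f l" and ?\<delta> = "if l = k then 1 else 0 :: real"
  have "(\<Sum>b\<in>UNIV. (\<integral>x. score l x $ i * score l x $ b \<partial>?P) * dir k $ b)
      = (\<integral>x. (\<Sum>b\<in>UNIV. score l x $ i * score l x $ b * dir k $ b) \<partial>?P)"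
    by (simp add: Bochner_Integration.integral_sum integrable_score_product)
  also have "\<dots> = (\<integral>x. score l x $ i * (\<Sum>b\<in>UNIV. score l x $ b * dir k $ b) \<partial>?P)"
    by (simp add: sum_distrib_left mult.assoc)
  also have "\<dots> = (\<integral>x. (?\<delta> * score l x $ i - score l x $ i * posterior k x) / r k \<partial>?P)"
  proof (intro Bochner_Integration.integral_cong refl)
    fix x assume "x \<in> space ?P"
    then have "x \<in> space M" by (simp add: distr_k_def)
    then show "score l x $ i * (\<Sum>b\<in>UNIV. score l x $ b * dir k $ b)
        = (?\<delta> * score l x $ i - score l x $ i * posterior k x) / r k"
      by (simp only: score_dot_class_dir) (simp add: algebra_simps diff_divide_distrib)
  qed
  also have "\<dots> = ((if l = k then mean_score l $ i else 0) - (\<integral>x. score l x $ i * posterior k x \<partial>?P)) / r k"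
    by (simp add: mean_score_def integrable_score integrable_score_posterior)
  finally show ?thesis .
qed

text \<open>Key step: the score moment maps the class direction \<open>v_k\<close> to the mean score of class \<open>k\<close>;
  the cross terms \<open>\<Sum>l r_l E_l[s_l p_k]\<close> vanish because the score has posterior mean zero.\<close>
lemma score_moment_class_dir: "score_moment *v dir k = mean_score k"
proof (intro iffD2[OF vec_eq_iff] allI)
  fix i
  define J where "J l = (\<integral>x. score l x $ i * posterior k x \<partial>distr_k M f l)" for l
  have "(\<Sum>l\<in>UNIV. r l * J l) = 0"
    unfolding J_def
  proof (rule weighted_class_integral_zero)
    fix x assume x: "x \<in> space M"
    have "(\<Sum>l\<in>UNIV. posterior l x * (score l x $ i * posterior k x))
        = posterior k x * (\<Sum>l\<in>UNIV. posterior l x * score l x $ i)"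
      by (simp add: sum_distrib_left mult_ac)
    then show "(\<Sum>l\<in>UNIV. posterior l x * (score l x $ i * posterior k x)) = 0"
      using score_mean_zero[OF x, of i] by simp
  qed (auto intro: integrable_score_posterior)
  moreover have "(score_moment *v dir k) $ i
      = (\<Sum>l\<in>UNIV. r l * ((if l = k then mean_score l $ i else 0) - J l) / r k)"
    by (simp add: matrix_vector_mult_def score_moment_def sum_distrib_right sum.swap[of _ UNIV]
          class_moment_dir J_def mult.assoc sum_distrib_left[symmetric])
  moreover have "r l * (if l = k then mean_score l $ i else 0) = (if l = k then r k * mean_score k $ i else 0)" for l
    by simp
  ultimately show "(score_moment *v dir k) $ i = mean_score k $ i"
    using r_pos[of k] by (simp add: sum_divide_distrib[symmetric] right_diff_distrib sum_subtractf)
qed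

end

theorem theorem3:
  fixes M :: "'x measure"
    and \<psi> :: "real^'s \<Rightarrow> 'x \<Rightarrow> 'y \<Rightarrow> real"
    and y :: "'k::finite option \<Rightarrow> 'y"
    and \<theta>0 :: "real^'s"
    and f :: "'k option \<Rightarrow> 'x \<Rightarrow> real"
    and \<beta> :: "'x \<Rightarrow> real"
    and \<epsilon> :: "'k option \<Rightarrow> real"
    and r :: "'k option \<Rightarrow> real"
    and n :: nat
    and nk :: "'k option \<Rightarrow> nat"
  defines "lam0 \<equiv> true_param \<theta>0 r \<epsilon>"
    and "I \<equiv> real n *\<^sub>R Ibar M \<psi> y r f (true_param \<theta>0 r \<epsilon>)"
    and "Sig \<equiv> real n *\<^sub>R Sigmabar M \<psi> y r f (true_param \<theta>0 r \<epsilon>)"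
  assumes sf: "sigma_finite_measure M"
    and y_inj: "inj y"
    and psi_meas: "\<And>\<theta> k. (\<lambda>x. \<psi> \<theta> x (y k)) \<in> borel_measurable M"
    and psi_0: "\<And>\<theta> x. x \<in> space M \<Longrightarrow> \<psi> \<theta> x (y None) = 0"
    and psi_C3: "\<And>x k. x \<in> space M \<Longrightarrow> C3_fun (\<lambda>\<theta>. \<psi> \<theta> x (y k))"
    and f_meas: "\<And>k. f k \<in> borel_measurable M"
    and f_pos: "\<And>k x. x \<in> space M \<Longrightarrow> 0 < f k x"
    and f_prob: "\<And>k. (\<integral>\<^sup>+x. ennreal (f k x) \<partial>M) = 1"
    and beta_meas: "\<beta> \<in> borel_measurable M"
    and f_form: "\<And>k x. x \<in> space M \<Longrightarrow> ln (f k x) = \<beta> x + \<psi> \<theta>0 x (y k) - \<epsilon> k"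
    and r_pos: "\<And>k. 0 < r k"
    and r_sum: "(\<Sum>k\<in>UNIV. r k) = 1"
    and n_pos: "0 < n"
    and nk_def: "\<And>k. real (nk k) = r k * real n"
    and I_pd: "pos_def I"
    and grad_sq: "\<And>k. (\<integral>\<^sup>+x. ennreal ((norm (grad (\<lambda>l. ln (p_star \<psi> y k x l)) lam0))\<^sup>2)
                        \<partial>(distr_k M f k)) < \<infinity>"
    and hess_int: "\<And>k. (\<integral>\<^sup>+x. ennreal (norm (hess (\<lambda>l. ln (p_star \<psi> y k x l)) lam0))
                        \<partial>(distr_k M f k)) < \<infinity>"
  shows "I - Sig = I ** Wblock nk ** I \<and>
         theta_block (matrix_inv I) = theta_block (matrix_inv I ** Sig ** matrix_inv I)"
proof -
  interpret association_model M \<psi> y \<theta>0 f \<beta> \<epsilon> r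
    using psi_meas psi_C3 f_meas f_pos f_prob f_form r_pos grad_sq hess_int
    unfolding lam0_def by unfold_locales
  define A where "A = real n *\<^sub>R score_moment"
  have I: "I = A"
    by (simp add: I_def A_def information_identity)
  have A_sym: "A $ i $ j = A $ j $ i" for i j
    by (simp add: A_def score_moment_symmetric)
  have A_dir: "A *v class_dir r k = real n *\<^sub>R mean_score k" for k
    by (simp add: A_def scaleR_matrix_vector_assoc[symmetric] score_moment_class_dir)
  have "I - Sig = real n *\<^sub>R (\<Sum>k\<in>UNIV. r k *\<^sub>R outer (mean_score k) (mean_score k))"
    by (simp add: I A_def Sig_def information_identity Sigmabar_eq scaleR_diff_right)
  also have "\<dots> = (\<Sum>k\<in>UNIV. (r k / real n) *\<^sub>R outer (A *v class_dir r k) (A *v class_dir r k))"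
    using n_pos by (simp add: A_dir outer_scaleR scaleR_sum_right mult.commute)
  also have "\<dots> = I ** Wblock nk ** I"
    by (simp add: I Wblock_outer[OF nk_def n_pos r_pos] sandwich_sum_outer[OF finite A_sym])
  finally have part_a: "I - Sig = I ** Wblock nk ** I" .
  then have "matrix_inv I ** Sig ** matrix_inv I = matrix_inv I - Wblock nk"
    by (rule inverse_sandwich[OF pos_def_invertible[OF I_pd]])
  then show ?thesis
    using part_a by (simp add: theta_block_minus_Wblock)
qed

end
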